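(* Consider an execution of \textsf{Sieve} (described in the context) in which the sender $\sigma$ is correct and broadcasts a message $m$. If in this execution the underlying probabilistic broadcast $pb$ satisfies totality (if some correct process $pb$-delivers a message, every correct process eventually $pb$-delivers a message), and no correct process has more than $E-\hat E$ Byzantine entries in its echo sample, then every correct process eventually delivers $m$ (i.e., total validity holds in this execution).
   Context: System model: a fixed set $\Pi$ of processes, some Byzantine (arbitrary behaviour) and the rest correct, asynchronous reliable authenticated point-to-point links (messages between correct processes are eventually delivered); signatures cannot be forged. $pb$ is a probabilistic broadcast instance: correct processes $pb$-deliver at most one message; if the sender is correct, any $pb$-delivered message was broadcast by it; a correct sender $pb$-delivers its own broadcast message. \textsf{Sieve} (parameters $E$, $\hat E$): each correct process draws an echo sample of $E$ entries, each uniformly from $\Pi$ with replacement, and sends EchoSubscribe to each; it records subscribers. To broadcast $m$, $\sigma$ $pb$-broadcasts $(m,\mathrm{sign}_\sigma(m))$. Upon $pb$-delivering a correctly signed pair, a correct process sets $echo$ to it and sends Echo with that pair to all current and future subscribers. A correct process records, for each member of its echo sample, the first correctly signed Echo received from it, and delivers (once) the message of its $echo$ when at least $\hat E$ members of its echo sample have sent Echo for that same pair. *)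

theory Defs
  imports Main
begin

(* Processes: the type 'p (Pi = UNIV).  C = set of correct processes.
   Time: nat (global discrete time, used only to express "eventually").
   A signed pair is ('m \<times> 's); sign q x is the (unique, deterministic) signature
   of process q on message x; a pair (x,s) is correctly signed by \<sigma> iff s = sign \<sigma> x. *)

datatype ('m, 's) smsg = EchoSubscribe | Echo "'m \<times> 's"

definition valid_sig :: "('p \<Rightarrow> 'm \<Rightarrow> 's) \<Rightarrow> 'p \<Rightarrow> 'm \<times> 's \<Rightarrow> bool" where
  "valid_sig sign \<sigma> y \<longleftrightarrow> snd y = sign \<sigma> (fst y)"

(* snd_ev q t : set of (destination, message) sent by q at time t
   rcv_ev q t : message (origin, message) received by q at time t (at most one per step) *)

definition reliable_authenticated_links ::
  "'p set \<Rightarrow> ('p \<Rightarrow> nat \<Rightarrow> ('p \<times> ('m,'s) smsg) set)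
          \<Rightarrow> ('p \<Rightarrow> nat \<Rightarrow> ('p \<times> ('m,'s) smsg) option) \<Rightarrow> bool" where
  "reliable_authenticated_links C snd_ev rcv_ev \<longleftrightarrow>
     (\<forall>p\<in>C. \<forall>q\<in>C. \<forall>t x. (q, x) \<in> snd_ev p t \<longrightarrow> (\<exists>t'>t. rcv_ev q t' = Some (p, x))) \<and>
     (\<forall>p\<in>C. \<forall>q\<in>C. \<forall>t x. rcv_ev q t = Some (p, x) \<longrightarrow> (\<exists>t'<t. (q, x) \<in> snd_ev p t'))"

(* unforgeability: sigma (correct) signs only m, so every correctly signed pair
   that reaches a correct process carries m *)
definition unforgeable ::
  "'p set \<Rightarrow> ('p \<Rightarrow> 'm \<Rightarrow> 's) \<Rightarrow> 'p \<Rightarrow> 'm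
     \<Rightarrow> ('p \<Rightarrow> nat \<Rightarrow> ('p \<times> ('m,'s) smsg) option) \<Rightarrow> bool" where
  "unforgeable C sign \<sigma> m rcv_ev \<longleftrightarrow>
     (\<forall>p\<in>C. \<forall>t q y. rcv_ev p t = Some (q, Echo y) \<and> valid_sig sign \<sigma> y \<longrightarrow> fst y = m)"

(* pbd q t = Some x : correct q has pb-delivered x at or before time t *)
definition pb_instance ::
  "'p set \<Rightarrow> ('p \<Rightarrow> 'm \<Rightarrow> 's) \<Rightarrow> 'p \<Rightarrow> 'm \<Rightarrow> ('p \<Rightarrow> nat \<Rightarrow> ('m \<times> 's) option) \<Rightarrow> bool" where
  "pb_instance C sign \<sigma> m pbd \<longleftrightarrow>
     (\<forall>p\<in>C. \<forall>t t' x. pbd p t = Some x \<and> t \<le> t' \<longrightarrow> pbd p t' = Some x) \<and>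
     (\<forall>p\<in>C. \<forall>t x. pbd p t = Some x \<longrightarrow> x = (m, sign \<sigma> m)) \<and>
     (\<exists>t. pbd \<sigma> t = Some (m, sign \<sigma> m))"

definition pb_totality :: "'p set \<Rightarrow> ('p \<Rightarrow> nat \<Rightarrow> ('m \<times> 's) option) \<Rightarrow> bool" where
  "pb_totality C pbd \<longleftrightarrow>
     (\<exists>p\<in>C. \<exists>t x. pbd p t = Some x) \<longrightarrow> (\<forall>p\<in>C. \<exists>t x. pbd p t = Some x)"

definition recorded ::
  "('p \<Rightarrow> 'm \<Rightarrow> 's) \<Rightarrow> 'p \<Rightarrow> ('p \<Rightarrow> nat \<Rightarrow> ('p \<times> ('m,'s) smsg) option)
     \<Rightarrow> 'p \<Rightarrow> 'p \<Rightarrow> 'm \<times> 's \<Rightarrow> nat \<Rightarrow> bool" where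
  "recorded sign \<sigma> rcv_ev p q y t \<longleftrightarrow>
     (\<exists>t'\<le>t. rcv_ev p t' = Some (q, Echo y) \<and> valid_sig sign \<sigma> y \<and>
        (\<forall>t''<t'. \<forall>y'. rcv_ev p t'' = Some (q, Echo y') \<longrightarrow> \<not> valid_sig sign \<sigma> y'))"

definition echo_count ::
  "('p \<Rightarrow> 'm \<Rightarrow> 's) \<Rightarrow> 'p \<Rightarrow> ('p \<Rightarrow> 'p list) \<Rightarrow> ('p \<Rightarrow> nat \<Rightarrow> ('p \<times> ('m,'s) smsg) option)
     \<Rightarrow> 'p \<Rightarrow> 'm \<times> 's \<Rightarrow> nat \<Rightarrow> nat" where
  "echo_count sign \<sigma> sample rcv_ev p y t =
     card {i. i < length (sample p) \<and> recorded sign \<sigma> rcv_ev p (sample p ! i) y t}"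

(* behaviour of correct processes running Sieve; dlv p t = Some x : p has delivered x by t *)
definition sieve_correct_behaviour ::
  "'p set \<Rightarrow> ('p \<Rightarrow> 'm \<Rightarrow> 's) \<Rightarrow> 'p \<Rightarrow> nat \<Rightarrow> nat \<Rightarrow> ('p \<Rightarrow> 'p list)
     \<Rightarrow> ('p \<Rightarrow> nat \<Rightarrow> ('p \<times> ('m,'s) smsg) set)
     \<Rightarrow> ('p \<Rightarrow> nat \<Rightarrow> ('p \<times> ('m,'s) smsg) option)
     \<Rightarrow> ('p \<Rightarrow> nat \<Rightarrow> ('m \<times> 's) option) \<Rightarrow> ('p \<Rightarrow> nat \<Rightarrow> 'm option) \<Rightarrow> bool" where
  "sieve_correct_behaviour C sign \<sigma> E Ehat sample snd_ev rcv_ev pbd dlv \<longleftrightarrow>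
     (\<forall>p\<in>C. length (sample p) = E) \<and>
     \<comment> \<open>EchoSubscribe to every member of the echo sample\<close>
     (\<forall>p\<in>C. \<forall>q\<in>set (sample p). \<exists>t. (q, EchoSubscribe) \<in> snd_ev p t) \<and>
     \<comment> \<open>EchoSubscribe sent only to members of the echo sample\<close>
     (\<forall>p\<in>C. \<forall>t q. (q, EchoSubscribe) \<in> snd_ev p t \<longrightarrow> q \<in> set (sample p)) \<and>
     \<comment> \<open>after pb-delivering a correctly signed pair, Echo it to all current and future subscribers\<close>
     (\<forall>p\<in>C. \<forall>t t' x q. pbd p t = Some x \<and> valid_sig sign \<sigma> x \<and>
         rcv_ev p t' = Some (q, EchoSubscribe) \<longrightarrow>
         (\<exists>t''. t \<le> t'' \<and> t' \<le> t'' \<and> (q, Echo x) \<in> snd_ev p t'')) \<and>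
     \<comment> \<open>only the own echo is sent, only to subscribers\<close>
     (\<forall>p\<in>C. \<forall>t q y. (q, Echo y) \<in> snd_ev p t \<longrightarrow>
         pbd p t = Some y \<and> valid_sig sign \<sigma> y \<and> (\<exists>t'\<le>t. rcv_ev p t' = Some (q, EchoSubscribe))) \<and>
     \<comment> \<open>delivery happens at most once\<close>
     (\<forall>p\<in>C. \<forall>t t' x. dlv p t = Some x \<and> t \<le> t' \<longrightarrow> dlv p t' = Some x) \<and>
     \<comment> \<open>delivery rule (liveness)\<close>
     (\<forall>p\<in>C. \<forall>t x. pbd p t = Some x \<and> valid_sig sign \<sigma> x \<and>
         Ehat \<le> echo_count sign \<sigma> sample rcv_ev p x t \<longrightarrow> (\<exists>t'. dlv p t' = Some (fst x))) \<and>
     \<comment> \<open>delivery rule (safety)\<close>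
     (\<forall>p\<in>C. \<forall>t x'. dlv p t = Some x' \<longrightarrow>
         (\<exists>t'\<le>t. \<exists>x. pbd p t' = Some x \<and> valid_sig sign \<sigma> x \<and> fst x = x' \<and>
            Ehat \<le> echo_count sign \<sigma> sample rcv_ev p x t'))"

end

theory Submission
  imports Defs
begin

text \<open>
  Since the sender is correct, it pb-delivers its own signed pair, so by totality every correct
  process pb-delivers a pair, which by the pb guarantees is the sender's pair \<open>(m, sign \<sigma> m)\<close>.
  A correct process \<open>p\<close> subscribes to each member \<open>q\<close> of its echo sample; if \<open>q\<close> is correct, it
  echoes that pair to \<open>p\<close>, and since no one can forge \<open>\<sigma>\<close>'s signature, the first correctly signed
  Echo that \<open>p\<close> records from \<open>q\<close> is this pair. From some time on, therefore, every correct entry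
  of \<open>p\<close>'s sample is counted, and there are at least \<open>E - (E - Ehat) = Ehat\<close> of them, so \<open>p\<close>
  delivers \<open>m\<close>.
\<close>

lemma valid_sig_eq_signed_pair:
  assumes "valid_sig sign \<sigma> y" and "fst y = m"
  shows "y = (m, sign \<sigma> m)"
  using assms by (cases y) (simp add: valid_sig_def)

lemma recorded_mono:
  assumes "recorded sign \<sigma> rcv_ev p q y t" and "t \<le> t'"
  shows "recorded sign \<sigma> rcv_ev p q y t'"
  using assms unfolding recorded_def by (meson order_trans)

lemma eventually_recorded_first_valid_echo:
  assumes "rcv_ev p t = Some (q, Echo y)" and "valid_sig sign \<sigma> y"
  obtains y' t' where "rcv_ev p t' = Some (q, Echo y')" and "valid_sig sign \<sigma> y'"
    and "eventually (recorded sign \<sigma> rcv_ev p q y') sequentially"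
proof -
  define valid_echo_at where
    "valid_echo_at t \<longleftrightarrow> (\<exists>y'. rcv_ev p t = Some (q, Echo y') \<and> valid_sig sign \<sigma> y')" for t
  define t' where "t' = (LEAST t. valid_echo_at t)"
  have "valid_echo_at t"
    using assms unfolding valid_echo_at_def by blast
  then have "valid_echo_at t'"
    unfolding t'_def by (rule LeastI)
  then obtain y' where y': "rcv_ev p t' = Some (q, Echo y')" "valid_sig sign \<sigma> y'"
    unfolding valid_echo_at_def by blast
  have "\<forall>t''<t'. \<forall>y''. rcv_ev p t'' = Some (q, Echo y'') \<longrightarrow> \<not> valid_sig sign \<sigma> y''"
    using not_less_Least[of _ valid_echo_at] unfolding t'_def valid_echo_at_def by blast
  with y' have "recorded sign \<sigma> rcv_ev p q y' t'"
    unfolding recorded_def by blast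
  then have "eventually (recorded sign \<sigma> rcv_ev p q y') sequentially"
    by (blast intro: eventually_sequentiallyI recorded_mono)
  with y' show ?thesis
    by (rule that)
qed

lemma eventually_recorded_signed_echo:
  assumes "unforgeable C sign \<sigma> m rcv_ev" and "p \<in> C"
    and "rcv_ev p t = Some (q, Echo y)" and "valid_sig sign \<sigma> y"
  shows "eventually (recorded sign \<sigma> rcv_ev p q (m, sign \<sigma> m)) sequentially"
proof -
  obtain y' t' where y': "rcv_ev p t' = Some (q, Echo y')" "valid_sig sign \<sigma> y'"
    and "eventually (recorded sign \<sigma> rcv_ev p q y') sequentially"
    using assms(3,4) by (rule eventually_recorded_first_valid_echo)
  moreover have "fst y' = m"
    using assms(1,2) y' unfolding unforgeable_def by blast
  ultimately show ?thesis
    using valid_sig_eq_signed_pair by metis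
qed

lemma pb_totality_eventually_delivers_signed_pair:
  assumes "\<sigma> \<in> C" and "pb_instance C sign \<sigma> m pbd" and "pb_totality C pbd" and "q \<in> C"
  shows "eventually (\<lambda>t. pbd q t = Some (m, sign \<sigma> m)) sequentially"
proof -
  obtain t x where "pbd q t = Some x"
    using assms unfolding pb_instance_def pb_totality_def by blast
  with assms(2,4) have "pbd q t = Some (m, sign \<sigma> m)"
    unfolding pb_instance_def by blast
  with assms(2,4) show ?thesis
    unfolding pb_instance_def by (blast intro: eventually_sequentiallyI)
qed

lemma sieve_sample_length:
  assumes "sieve_correct_behaviour C sign \<sigma> E Ehat sample snd_ev rcv_ev pbd dlv" and "p \<in> C"
  shows "length (sample p) = E"
  using assms by (simp add: sieve_correct_behaviour_def)

lemma sieve_subscribes: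
  assumes "sieve_correct_behaviour C sign \<sigma> E Ehat sample snd_ev rcv_ev pbd dlv" and "p \<in> C"
    and "q \<in> set (sample p)"
  shows "\<exists>t. (q, EchoSubscribe) \<in> snd_ev p t"
  using assms unfolding sieve_correct_behaviour_def by (elim conjE) metis

lemma sieve_echoes_to_subscriber:
  assumes "sieve_correct_behaviour C sign \<sigma> E Ehat sample snd_ev rcv_ev pbd dlv" and "p \<in> C"
    and "pbd p t = Some x" and "valid_sig sign \<sigma> x" and "rcv_ev p t' = Some (q, EchoSubscribe)"
  shows "\<exists>t''. (q, Echo x) \<in> snd_ev p t''"
  using assms unfolding sieve_correct_behaviour_def by (elim conjE) metis

lemma sieve_delivers:
  assumes "sieve_correct_behaviour C sign \<sigma> E Ehat sample snd_ev rcv_ev pbd dlv" and "p \<in> C"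
    and "pbd p t = Some x" and "valid_sig sign \<sigma> x"
    and "Ehat \<le> echo_count sign \<sigma> sample rcv_ev p x t"
  shows "\<exists>t'. dlv p t' = Some (fst x)"
  using assms unfolding sieve_correct_behaviour_def by (elim conjE) metis

lemma reliable_links_deliver:
  assumes "reliable_authenticated_links C snd_ev rcv_ev" and "p \<in> C" and "q \<in> C"
    and "(q, x) \<in> snd_ev p t"
  shows "\<exists>t'. rcv_ev q t' = Some (p, x)"
  using assms unfolding reliable_authenticated_links_def by blast

lemma sieve_correct_sample_member_echoes:
  assumes links: "reliable_authenticated_links C snd_ev rcv_ev"
    and sieve: "sieve_correct_behaviour C sign \<sigma> E Ehat sample snd_ev rcv_ev pbd dlv"
    and "p \<in> C" and "q \<in> C" and "q \<in> set (sample p)"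
    and "pbd q t = Some y" and "valid_sig sign \<sigma> y"
  shows "\<exists>t'. rcv_ev p t' = Some (q, Echo y)"
proof -
  obtain t0 where "(q, EchoSubscribe) \<in> snd_ev p t0"
    using sieve_subscribes[OF sieve \<open>p \<in> C\<close> \<open>q \<in> set (sample p)\<close>] by blast
  then obtain t1 where "rcv_ev q t1 = Some (p, EchoSubscribe)"
    using reliable_links_deliver[OF links \<open>p \<in> C\<close> \<open>q \<in> C\<close>] by blast
  then obtain t2 where "(p, Echo y) \<in> snd_ev q t2"
    using sieve_echoes_to_subscriber[OF sieve \<open>q \<in> C\<close> assms(6,7)] by blast
  then show ?thesis
    using reliable_links_deliver[OF links \<open>q \<in> C\<close> \<open>p \<in> C\<close>] by blast
qed

lemma echo_count_ge_recording_members: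
  assumes "\<forall>q\<in>set (sample p) \<inter> A. recorded sign \<sigma> rcv_ev p q y t"
  shows "length (filter (\<lambda>q. q \<in> A) (sample p)) \<le> echo_count sign \<sigma> sample rcv_ev p y t"
  unfolding echo_count_def length_filter_conv_card
  using assms by (intro card_mono) auto

lemma few_outside_imp_enough_inside:
  assumes "length xs = E" and "int (length (filter (\<lambda>q. q \<notin> A) xs)) \<le> int E - int Ehat"
  shows "Ehat \<le> length (filter (\<lambda>q. q \<in> A) xs)"
  using assms sum_length_filter_compl[of "\<lambda>q. q \<in> A" xs] by linarith

theorem lemma5:
  fixes C :: "'p set" and \<sigma> :: 'p and m :: 'm and sign :: "'p \<Rightarrow> 'm \<Rightarrow> 's"
    and E Ehat :: nat and sample :: "'p \<Rightarrow> 'p list"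
    and snd_ev :: "'p \<Rightarrow> nat \<Rightarrow> ('p \<times> ('m,'s) smsg) set"
    and rcv_ev :: "'p \<Rightarrow> nat \<Rightarrow> ('p \<times> ('m,'s) smsg) option"
    and pbd :: "'p \<Rightarrow> nat \<Rightarrow> ('m \<times> 's) option"
    and dlv :: "'p \<Rightarrow> nat \<Rightarrow> 'm option"
  assumes sender_correct: "\<sigma> \<in> C"
    and links: "reliable_authenticated_links C snd_ev rcv_ev"
    and unforg: "unforgeable C sign \<sigma> m rcv_ev"
    and pb: "pb_instance C sign \<sigma> m pbd"
    and sieve: "sieve_correct_behaviour C sign \<sigma> E Ehat sample snd_ev rcv_ev pbd dlv"
    and totality: "pb_totality C pbd"
    and few_byz: "\<forall>p\<in>C. int (length (filter (\<lambda>q. q \<notin> C) (sample p))) \<le> int E - int Ehat"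
  shows "\<forall>p\<in>C. \<exists>t. dlv p t = Some m"
proof
  fix p assume "p \<in> C"
  let ?y = "(m, sign \<sigma> m)"
  have signed: "valid_sig sign \<sigma> ?y"
    by (simp add: valid_sig_def)
  have pb_eventually: "eventually (\<lambda>t. pbd q t = Some ?y) sequentially" if "q \<in> C" for q
    using sender_correct pb totality that by (rule pb_totality_eventually_delivers_signed_pair)
  have "\<forall>q\<in>set (sample p) \<inter> C. eventually (recorded sign \<sigma> rcv_ev p q ?y) sequentially"
  proof
    fix q assume q: "q \<in> set (sample p) \<inter> C"
    then obtain tq where "pbd q tq = Some ?y"
      using eventually_happens'[OF sequentially_bot pb_eventually] by blast
    then obtain t where "rcv_ev p t = Some (q, Echo ?y)"
      using sieve_correct_sample_member_echoes[OF links sieve \<open>p \<in> C\<close>] q signed by blast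
    then show "eventually (recorded sign \<sigma> rcv_ev p q ?y) sequentially"
      by (rule eventually_recorded_signed_echo[OF unforg \<open>p \<in> C\<close> _ signed])
  qed
  then have "eventually (\<lambda>T. \<forall>q\<in>set (sample p) \<inter> C. recorded sign \<sigma> rcv_ev p q ?y T) sequentially"
    by (simp add: eventually_ball_finite)
  then obtain T where recorded: "\<forall>q\<in>set (sample p) \<inter> C. recorded sign \<sigma> rcv_ev p q ?y T"
    and pbd: "pbd p T = Some ?y"
    using eventually_happens'[OF sequentially_bot eventually_conj[OF _ pb_eventually[OF \<open>p \<in> C\<close>]]]
    by blast
  have "Ehat \<le> length (filter (\<lambda>q. q \<in> C) (sample p))"
    using sieve_sample_length[OF sieve \<open>p \<in> C\<close>] few_byz \<open>p \<in> C\<close>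
    by (blast intro: few_outside_imp_enough_inside)
  also have "\<dots> \<le> echo_count sign \<sigma> sample rcv_ev p ?y T"
    using recorded by (rule echo_count_ge_recording_members)
  finally show "\<exists>t. dlv p t = Some m"
    using sieve_delivers[OF sieve \<open>p \<in> C\<close> pbd signed] by simp
qed

end
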